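(* In the reset-button collector, let $s_n:=\phi_n(q_n)=\mathbb Eq_n^{C_n}$. Then $\mathbb ET_n=\dfrac{1-s_n}{\rho_ns_n}$.
   Context: Reset-button collector: fix $n\ge1$. There are standard coupons $1,\dots,n$ and a reset coupon. At each discrete time $t=1,2,\dots$ one coupon is sampled independently: the reset coupon with probability $\rho_n\in(0,1)$, standard coupon $i$ with probability $p_{i,n}>0$, where $\sum_ip_{i,n}=q_n:=1-\rho_n$. Starting from the empty collection, drawn standard coupons are added; a reset empties the collection and collecting continues. $T_n$ is the first time all $n$ standard coupons are present. $C_n$ is the ordinary coupon collector completion time (number of i.i.d. draws until all types seen) with type probabilities $p_{i,n}/q_n$, and $\phi_n(z)=\mathbb Ez^{C_n}$. *)

theory Defs
  imports "HOL-Probability.Probability"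
begin

text \<open>Draw distribution of the reset-button collector: None is the reset coupon
  (probability rho), Some i is standard coupon i (probability p i), for i in {1..n}.\<close>
definition reset_draw :: "nat \<Rightarrow> real \<Rightarrow> (nat \<Rightarrow> real) \<Rightarrow> nat option pmf" where
  "reset_draw n \<rho> p = embed_pmf (\<lambda>x. case x of None \<Rightarrow> \<rho>
                                   | Some i \<Rightarrow> (if i \<in> {1..n} then p i else 0))"

primrec reset_coll :: "nat option stream \<Rightarrow> nat \<Rightarrow> nat set" where
  "reset_coll \<omega> 0 = {}"
| "reset_coll \<omega> (Suc t) = (case \<omega> !! t of None \<Rightarrow> {} | Some i \<Rightarrow> insert i (reset_coll \<omega> t))"

definition reset_time :: "nat \<Rightarrow> nat option stream \<Rightarrow> enat" where
  "reset_time n \<omega> = (if \<exists>t. {1..n} \<subseteq> reset_coll \<omega> t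
                      then enat (LEAST t. {1..n} \<subseteq> reset_coll \<omega> t) else \<infinity>)"

definition coll_draw :: "nat \<Rightarrow> real \<Rightarrow> (nat \<Rightarrow> real) \<Rightarrow> nat pmf" where
  "coll_draw n q p = embed_pmf (\<lambda>i. if i \<in> {1..n} then p i / q else 0)"

definition coll_time :: "nat \<Rightarrow> nat stream \<Rightarrow> enat" where
  "coll_time n \<omega> = (if \<exists>t. {1..n} \<subseteq> {\<omega> !! k | k. k < t}
                     then enat (LEAST t. {1..n} \<subseteq> {\<omega> !! k | k. k < t}) else \<infinity>)"

text \<open>z^C for an extended natural C, with z^infinity := 0 (used only for 0 <= z < 1).\<close>
definition pow_enat :: "real \<Rightarrow> enat \<Rightarrow> real" where
  "pow_enat z C = (case C of enat k \<Rightarrow> z ^ k | \<infinity> \<Rightarrow> 0)"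

end

theory Submission
  imports Defs
begin

(* Write r(S) for the expected time to complete the collection from a current collection S and
   g(S) = E q^C for the ordinary collector started from S. Conditioning on the first draw gives,
   for S a proper subset of {1..n},
     r(S) = 1 + rho r({}) + sum_i p_i r(S + i),   g(S) = sum_i p_i g(S + i),
   with r({1..n}) = 0 and g({1..n}) = 1 (the factor q of each collector draw cancels the
   normalisation p_i / q). The function (1 - g) / (rho g({})) solves the first system, and it is
   the only solution: if d solves the homogeneous system, then d - d({}) (1 - g) is g-harmonic
   with zero boundary values, hence zero, and evaluating at {} forces d({}) g({}) = 0.
   That r is finite at all follows because the nonnegative explicit solution dominates the
   truncated means, by induction on the truncation level. *)

lemma finite_subset_down_induct[consumes 2, case_names step]:
  assumes "finite U" "S \<subseteq> U"
    and step: "\<And>S. S \<subseteq> U \<Longrightarrow> (\<And>i. i \<in> U \<Longrightarrow> i \<notin> S \<Longrightarrow> P (insert i S)) \<Longrightarrow> P S"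
  shows "P S"
  using assms(2)
proof (induction "card (U - S)" arbitrary: S rule: less_induct)
  case less
  show ?case
  proof (rule step[OF less.prems])
    fix i assume i: "i \<in> U" "i \<notin> S"
    then have "card (U - insert i S) < card (U - S)"
      using \<open>finite U\<close> by (intro psubset_card_mono) auto
    with i less show "P (insert i S)" by blast
  qed
qed

lemma sum_ennreal_mult:
  assumes "\<And>i. i \<in> A \<Longrightarrow> 0 \<le> w i" "\<And>i. i \<in> A \<Longrightarrow> 0 \<le> f i"
  shows "(\<Sum>i\<in>A. ennreal (w i) * ennreal (f i)) = ennreal (\<Sum>i\<in>A. w i * f i)"
  using assms by (simp add: ennreal_mult[symmetric] sum_ennreal)

lemma pmf_embed_pmf_finite_support:
  assumes "finite A" "\<And>x. 0 \<le> f x" "\<And>x. x \<notin> A \<Longrightarrow> f x = 0" "sum f A = 1"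
  shows "pmf (embed_pmf f) x = f x"
proof (rule pmf_embed_pmf)
  have "(\<integral>\<^sup>+x. ennreal (f x) \<partial>count_space UNIV) = (\<Sum>x\<in>A. ennreal (f x))"
    using assms by (intro nn_integral_count_space') auto
  then show "(\<integral>\<^sup>+x. ennreal (f x) \<partial>count_space UNIV) = 1"
    using assms by (simp add: sum_ennreal)
qed (rule assms(2))

lemma ennreal_of_enat_eq_SUP_min: "ennreal_of_enat e = (SUP m. ennreal_of_enat (min e (enat m)))"
proof (cases e)
  case (enat k)
  show ?thesis
  proof (rule antisym)
    show "ennreal_of_enat e \<le> (SUP m. ennreal_of_enat (min e (enat m)))"
      by (rule SUP_upper2[of k]) (auto simp: enat)
  qed (rule SUP_least, simp add: ennreal_of_enat_le_iff)
qed (simp add: ennreal_SUP_of_nat_eq_top)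

lemma min_eSuc_eSuc: "min (eSuc a) (eSuc b) = eSuc (min a b)"
  by (simp add: min_def eSuc_ile_mono)

lemma pow_enat_eSuc: "pow_enat z (eSuc c) = z * pow_enat z c"
  by (cases c) (simp_all add: pow_enat_def eSuc_enat)

lemma pow_enat_nonneg: "0 \<le> z \<Longrightarrow> 0 \<le> pow_enat z c"
  by (cases c) (simp_all add: pow_enat_def)

lemma pow_enat_le_1: "0 \<le> z \<Longrightarrow> z \<le> 1 \<Longrightarrow> pow_enat z c \<le> 1"
  by (cases c) (simp_all add: pow_enat_def power_le_one)

definition first_hit :: "(nat \<Rightarrow> bool) \<Rightarrow> enat" where
  "first_hit P = (if \<exists>t. P t then enat (LEAST t. P t) else \<infinity>)"

lemma first_hit_0: "P 0 \<Longrightarrow> first_hit P = 0"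
  by (auto simp: first_hit_def zero_enat_def intro!: Least_equality)

lemma first_hit_Suc:
  assumes "\<not> P 0"
  shows "first_hit P = eSuc (first_hit (\<lambda>t. P (Suc t)))"
proof (cases "\<exists>t. P t")
  case True
  then obtain t where t: "P t" by blast
  with assms obtain u where "t = Suc u" by (cases t) auto
  with t assms show ?thesis by (auto simp: first_hit_def eSuc_enat Least_Suc[of P t])
qed (simp add: first_hit_def)

lemma measurable_first_hit_stake:
  fixes P :: "nat \<Rightarrow> 'a::countable list \<Rightarrow> bool"
  assumes "sets M = sets (count_space UNIV)"
  shows "(\<lambda>\<omega>. first_hit (\<lambda>t. P t (stake t \<omega>))) \<in> stream_space M \<rightarrow>\<^sub>M count_space UNIV"
proof -
  have [measurable_cong]: "sets (stream_space M) = sets (stream_space (count_space UNIV))"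
    using assms by (rule sets_stream_space_cong)
  have [measurable]: "Measurable.pred (stream_space M) (\<lambda>\<omega>. P t (stake t \<omega>))" for t
    using measurable_compose[OF measurable_stake, of "P t" "count_space UNIV" t] by simp
  show ?thesis
    unfolding first_hit_def by measurable
qed

fun reset_update :: "nat set \<Rightarrow> nat option \<Rightarrow> nat set" where
  "reset_update S None = {}"
| "reset_update S (Some i) = insert i S"

definition reset_time_from :: "nat \<Rightarrow> nat set \<Rightarrow> nat option stream \<Rightarrow> enat" where
  "reset_time_from n S \<omega> = first_hit (\<lambda>t. {1..n} \<subseteq> foldl reset_update S (stake t \<omega>))"

definition coll_time_from :: "nat \<Rightarrow> nat set \<Rightarrow> nat stream \<Rightarrow> enat" where
  "coll_time_from n S \<omega> = first_hit (\<lambda>t. {1..n} \<subseteq> S \<union> set (stake t \<omega>))"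

lemma reset_coll_eq_foldl: "reset_coll \<omega> t = foldl reset_update {} (stake t \<omega>)"
  by (induction t) (auto simp del: stake.simps(2) simp: stake_Suc split: option.split)

lemma reset_time_eq_from_empty: "reset_time n = reset_time_from n {}"
  by (simp add: fun_eq_iff reset_time_def reset_time_from_def first_hit_def reset_coll_eq_foldl)

lemma set_stake_eq: "set (stake t \<omega>) = {\<omega> !! k | k. k < t}"
  by (induction t) (auto simp del: stake.simps(2) simp: stake_Suc less_Suc_eq)

lemma coll_time_eq_from_empty: "coll_time n = coll_time_from n {}"
  by (simp add: fun_eq_iff coll_time_def coll_time_from_def first_hit_def set_stake_eq)

lemma reset_time_from_full: "{1..n} \<subseteq> S \<Longrightarrow> reset_time_from n S \<omega> = 0"
  by (simp add: reset_time_from_def first_hit_0)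

lemma reset_time_from_Cons:
  "\<not> {1..n} \<subseteq> S \<Longrightarrow> reset_time_from n S (y ## \<omega>) = eSuc (reset_time_from n (reset_update S y) \<omega>)"
  unfolding reset_time_from_def by (subst first_hit_Suc) simp_all

lemma coll_time_from_full: "{1..n} \<subseteq> S \<Longrightarrow> coll_time_from n S \<omega> = 0"
  by (simp add: coll_time_from_def first_hit_0)

lemma coll_time_from_Cons:
  "\<not> {1..n} \<subseteq> S \<Longrightarrow> coll_time_from n S (y ## \<omega>) = eSuc (coll_time_from n (insert y S) \<omega>)"
  unfolding coll_time_from_def by (subst first_hit_Suc) simp_all

lemma measurable_reset_time_from[measurable]:
  "reset_time_from n S \<in> stream_space (measure_pmf D) \<rightarrow>\<^sub>M count_space UNIV"
  unfolding reset_time_from_def[abs_def] by (rule measurable_first_hit_stake) simp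

lemma measurable_coll_time_from[measurable]:
  "coll_time_from n S \<in> stream_space (measure_pmf D) \<rightarrow>\<^sub>M count_space UNIV"
  unfolding coll_time_from_def[abs_def] by (rule measurable_first_hit_stake) simp

locale reset_collector =
  fixes n :: nat and \<rho> :: real and p :: "nat \<Rightarrow> real"
  assumes rho_pos: "0 < \<rho>" and rho_less_1: "\<rho> < 1"
    and p_pos: "\<And>i. i \<in> {1..n} \<Longrightarrow> p i > 0"
    and sum_p: "(\<Sum>i\<in>{1..n}. p i) = 1 - \<rho>"
begin

definition coll_harmonic :: "(nat set \<Rightarrow> real) \<Rightarrow> bool" where
  "coll_harmonic f \<longleftrightarrow> (\<forall>S\<subset>{1..n}. f S = (\<Sum>i\<in>{1..n}. p i * f (insert i S)))"

definition reset_system :: "(nat set \<Rightarrow> real) \<Rightarrow> bool" where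
  "reset_system r \<longleftrightarrow> r {1..n} = 0 \<and>
     (\<forall>S\<subset>{1..n}. r S = 1 + \<rho> * r {} + (\<Sum>i\<in>{1..n}. p i * r (insert i S)))"

lemma coll_harmonic_eq_0:
  assumes e: "coll_harmonic e" "e {1..n} = 0" and "S \<subseteq> {1..n}"
  shows "e S = 0"
  using finite_atLeastAtMost \<open>S \<subseteq> {1..n}\<close>
proof (induction S rule: finite_subset_down_induct)
  case (step S)
  show ?case
  proof (cases "S = {1..n}")
    case False
    with step.hyps have "S \<subset> {1..n}" by blast
    then have "e S = (\<Sum>i\<in>{1..n}. p i * e (insert i S))"
      using e by (simp add: coll_harmonic_def)
    also have "\<dots> = (\<Sum>i\<in>S. p i * e (insert i S))"
      using step by (intro sum.mono_neutral_right) auto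
    also have "\<dots> = (\<Sum>i\<in>S. p i) * e S"
      by (simp add: sum_distrib_right insert_absorb)
    finally have "(1 - (\<Sum>i\<in>S. p i)) * e S = 0"
      by (simp add: algebra_simps)
    moreover have "(\<Sum>i\<in>S. p i) \<le> (\<Sum>i\<in>{1..n}. p i)"
      using step.hyps p_pos by (intro sum_mono2) (auto intro: less_imp_le)
    ultimately show ?thesis
      using sum_p rho_pos by auto
  qed (use e in simp)
qed

lemma coll_harmonic_pos:
  assumes f: "coll_harmonic f" "0 < f {1..n}" "\<And>S. 0 \<le> f S" and "S \<subseteq> {1..n}"
  shows "0 < f S"
  using finite_atLeastAtMost \<open>S \<subseteq> {1..n}\<close>
proof (induction S rule: finite_subset_down_induct)
  case (step S)
  show ?case
  proof (cases "S = {1..n}")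
    case False
    with step.hyps obtain i where i: "i \<in> {1..n}" "i \<notin> S" by blast
    have pos_i: "0 < p i * f (insert i S)"
      using p_pos[OF i(1)] step.IH[OF i] by simp
    have "0 < (\<Sum>i\<in>{1..n}. p i * f (insert i S))"
    proof (rule sum_pos2[of "{1..n}" i])
      show "0 \<le> p j * f (insert j S)" if "j \<in> {1..n}" for j
        using p_pos[OF that] f(3)[of "insert j S"] by simp
    qed (use i pos_i in simp_all)
    moreover have "S \<subset> {1..n}" using False step.hyps by blast
    ultimately show ?thesis
      using f(1) by (simp add: coll_harmonic_def)
  qed (use f in simp)
qed

lemma reset_system_closed_form:
  assumes g: "coll_harmonic g" "g {1..n} = 1" "g {} \<noteq> 0"
  shows "reset_system (\<lambda>S. (1 - g S) / (\<rho> * g {}))"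
  unfolding reset_system_def
proof (intro conjI allI impI)
  fix S assume "S \<subset> {1..n}"
  then have sum_eq: "(\<Sum>i\<in>{1..n}. p i * ((1 - g (insert i S)) / (\<rho> * g {})))
      = (1 - \<rho> - g S) / (\<rho> * g {})"
    using g(1) sum_p
    by (simp add: coll_harmonic_def sum_divide_distrib[symmetric] sum_subtractf right_diff_distrib)
  then show "(1 - g S) / (\<rho> * g {})
      = 1 + \<rho> * ((1 - g {}) / (\<rho> * g {})) + (\<Sum>i\<in>{1..n}. p i * ((1 - g (insert i S)) / (\<rho> * g {})))"
    unfolding sum_eq using rho_pos g(3) by (simp add: field_simps)
qed (use g(2) in simp)

lemma reset_system_unique:
  assumes g: "coll_harmonic g" "g {1..n} = 1" "g {} \<noteq> 0"
    and r: "reset_system r" "reset_system r'" and "S \<subseteq> {1..n}"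
  shows "r S = r' S"
proof -
  define d where "d S = r S - r' S" for S
  define e where "e S = d S - d {} * (1 - g S)" for S
  \<comment> \<open>since 1 - g S = \<rho> + (\<Sum>i\<in>{1..n}. p i * (1 - g (insert i S))), this cancels the reset term\<close>
  have "coll_harmonic e"
    unfolding coll_harmonic_def
  proof (intro allI impI)
    fix S assume S: "S \<subset> {1..n}"
    have d_sum: "(\<Sum>i\<in>{1..n}. p i * d (insert i S)) = d S - \<rho> * d {}"
      using S r by (simp add: d_def reset_system_def sum_subtractf right_diff_distrib)
    have g_sum: "(\<Sum>i\<in>{1..n}. p i * g (insert i S)) = g S"
      using S g(1) by (simp add: coll_harmonic_def)
    have "(\<Sum>i\<in>{1..n}. p i * e (insert i S))
        = (\<Sum>i\<in>{1..n}. p i * d (insert i S)) - d {} * (\<Sum>i\<in>{1..n}. p i)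
          + d {} * (\<Sum>i\<in>{1..n}. p i * g (insert i S))"
      by (simp add: e_def algebra_simps sum.distrib sum_subtractf sum_distrib_left)
    also have "\<dots> = e S"
      unfolding d_sum g_sum sum_p by (simp add: e_def algebra_simps)
    finally show "e S = (\<Sum>i\<in>{1..n}. p i * e (insert i S))" ..
  qed
  moreover have "e {1..n} = 0"
    using r g(2) by (simp add: e_def d_def reset_system_def)
  ultimately have e0: "e S = 0" if "S \<subseteq> {1..n}" for S
    using that by (rule coll_harmonic_eq_0)
  from e0[of "{}"] have "d {} * g {} = 0"
    by (simp add: e_def algebra_simps)
  with g(3) have "d {} = 0" by simp
  with e0[OF \<open>S \<subseteq> {1..n}\<close>] show ?thesis
    by (simp add: e_def d_def)
qed

abbreviation reset_paths :: "nat option stream measure" where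
  "reset_paths \<equiv> stream_space (measure_pmf (reset_draw n \<rho> p))"

abbreviation coll_paths :: "nat stream measure" where
  "coll_paths \<equiv> stream_space (measure_pmf (coll_draw n (1 - \<rho>) p))"

lemma nn_integral_reset_draw:
  "(\<integral>\<^sup>+y. F y \<partial>measure_pmf (reset_draw n \<rho> p))
     = ennreal \<rho> * F None + (\<Sum>i\<in>{1..n}. ennreal (p i) * F (Some i))"
proof -
  let ?f = "\<lambda>x. case x of None \<Rightarrow> \<rho> | Some i \<Rightarrow> if i \<in> {1..n} then p i else 0"
  let ?A = "insert None (Some ` {1..n})"
  have pmf: "pmf (reset_draw n \<rho> p) x = ?f x" for x
    unfolding reset_draw_def
  proof (rule pmf_embed_pmf_finite_support[of ?A])
    show "sum ?f ?A = 1"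
      using sum_p by (simp add: sum.reindex)
  qed (use rho_pos p_pos in \<open>auto split: option.split intro: less_imp_le\<close>)
  have "(\<integral>\<^sup>+y. F y \<partial>measure_pmf (reset_draw n \<rho> p)) = (\<Sum>x\<in>?A. F x * pmf (reset_draw n \<rho> p) x)"
    by (rule nn_integral_measure_pmf_support) (auto simp: set_pmf_iff pmf image_iff split: option.split if_splits)
  then show ?thesis
    by (simp add: pmf sum.reindex mult.commute)
qed

lemma nn_integral_coll_draw:
  "(\<integral>\<^sup>+y. F y \<partial>measure_pmf (coll_draw n (1 - \<rho>) p)) = (\<Sum>i\<in>{1..n}. ennreal (p i / (1 - \<rho>)) * F i)"
proof -
  let ?f = "\<lambda>i. if i \<in> {1..n} then p i / (1 - \<rho>) else 0"
  have pmf: "pmf (coll_draw n (1 - \<rho>) p) i = ?f i" for i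
    unfolding coll_draw_def
  proof (rule pmf_embed_pmf_finite_support[of "{1..n}"])
    show "sum ?f {1..n} = 1"
      using sum_p rho_less_1 by (simp add: sum_divide_distrib[symmetric])
  qed (use rho_less_1 p_pos in \<open>auto intro: less_imp_le\<close>)
  have "(\<integral>\<^sup>+y. F y \<partial>measure_pmf (coll_draw n (1 - \<rho>) p)) = (\<Sum>i\<in>{1..n}. F i * pmf (coll_draw n (1 - \<rho>) p) i)"
    by (rule nn_integral_measure_pmf_support) (auto simp: set_pmf_iff pmf)
  then show ?thesis
    by (simp add: pmf mult.commute)
qed

definition reset_mean_upto :: "enat \<Rightarrow> nat set \<Rightarrow> ennreal" where
  "reset_mean_upto m S = (\<integral>\<^sup>+\<omega>. ennreal_of_enat (min (reset_time_from n S \<omega>) m) \<partial>reset_paths)"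

definition coll_gf_ennreal :: "nat set \<Rightarrow> ennreal" where
  "coll_gf_ennreal S = (\<integral>\<^sup>+\<omega>. ennreal (pow_enat (1 - \<rho>) (coll_time_from n S \<omega>)) \<partial>coll_paths)"

lemma reset_mean_upto_full: "{1..n} \<subseteq> S \<Longrightarrow> reset_mean_upto m S = 0"
  by (simp add: reset_mean_upto_def reset_time_from_full)

lemma reset_mean_upto_eSuc:
  assumes "\<not> {1..n} \<subseteq> S"
  shows "reset_mean_upto (eSuc m) S
    = 1 + ennreal \<rho> * reset_mean_upto m {} + (\<Sum>i\<in>{1..n}. ennreal (p i) * reset_mean_upto m (insert i S))"
proof -
  interpret paths: prob_space reset_paths
    by (rule prob_space.prob_space_stream_space) (rule prob_space_measure_pmf)
  have "reset_mean_upto (eSuc m) S = (\<integral>\<^sup>+y. \<integral>\<^sup>+\<omega>.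
      ennreal_of_enat (min (reset_time_from n S (y ## \<omega>)) (eSuc m)) \<partial>reset_paths \<partial>measure_pmf (reset_draw n \<rho> p))"
    unfolding reset_mean_upto_def
    by (rule prob_space.nn_integral_stream_space[OF prob_space_measure_pmf]) measurable
  also have "\<dots> = (\<integral>\<^sup>+y. \<integral>\<^sup>+\<omega>. 1 + ennreal_of_enat (min (reset_time_from n (reset_update S y) \<omega>) m)
      \<partial>reset_paths \<partial>measure_pmf (reset_draw n \<rho> p))"
    using assms by (simp add: reset_time_from_Cons min_eSuc_eSuc)
  also have "\<dots> = (\<integral>\<^sup>+y. 1 + reset_mean_upto m (reset_update S y) \<partial>measure_pmf (reset_draw n \<rho> p))"
    by (subst nn_integral_add) (simp_all add: reset_mean_upto_def paths.emeasure_space_1)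
  also have "\<dots> = 1 + ennreal \<rho> * reset_mean_upto m {} + (\<Sum>i\<in>{1..n}. ennreal (p i) * reset_mean_upto m (insert i S))"
    by (subst nn_integral_add) (simp_all add: measure_pmf.emeasure_space_1 nn_integral_reset_draw add.assoc)
  finally show ?thesis .
qed

lemma reset_mean_upto_infinity: "reset_mean_upto \<infinity> S = (SUP m. reset_mean_upto (enat m) S)"
  unfolding reset_mean_upto_def min_enat_simps(4)
  by (subst ennreal_of_enat_eq_SUP_min, rule nn_integral_monotone_convergence_SUP)
    (auto simp: incseq_def le_fun_def ennreal_of_enat_le_iff min_le_iff_disj)

lemma coll_gf_ennreal_full: "{1..n} \<subseteq> S \<Longrightarrow> coll_gf_ennreal S = 1"
proof -
  interpret paths: prob_space coll_paths
    by (rule prob_space.prob_space_stream_space) (rule prob_space_measure_pmf)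
  assume "{1..n} \<subseteq> S"
  then show ?thesis
    by (simp add: coll_gf_ennreal_def coll_time_from_full pow_enat_def zero_enat_def paths.emeasure_space_1)
qed

lemma coll_gf_ennreal_le_1: "coll_gf_ennreal S \<le> 1"
proof -
  interpret paths: prob_space coll_paths
    by (rule prob_space.prob_space_stream_space) (rule prob_space_measure_pmf)
  have "coll_gf_ennreal S \<le> (\<integral>\<^sup>+\<omega>. 1 \<partial>coll_paths)"
    unfolding coll_gf_ennreal_def using rho_pos rho_less_1
    by (intro nn_integral_mono) (simp add: pow_enat_le_1)
  then show ?thesis
    by (simp add: paths.emeasure_space_1)
qed

lemma coll_gf_ennreal_step:
  assumes "\<not> {1..n} \<subseteq> S"
  shows "coll_gf_ennreal S = (\<Sum>i\<in>{1..n}. ennreal (p i) * coll_gf_ennreal (insert i S))"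
proof -
  have "coll_gf_ennreal S = (\<integral>\<^sup>+y. \<integral>\<^sup>+\<omega>. ennreal (pow_enat (1 - \<rho>) (coll_time_from n S (y ## \<omega>)))
      \<partial>coll_paths \<partial>measure_pmf (coll_draw n (1 - \<rho>) p))"
    unfolding coll_gf_ennreal_def
    by (rule prob_space.nn_integral_stream_space[OF prob_space_measure_pmf]) measurable
  also have "\<dots> = (\<integral>\<^sup>+y. \<integral>\<^sup>+\<omega>. ennreal (1 - \<rho>) * ennreal (pow_enat (1 - \<rho>) (coll_time_from n (insert y S) \<omega>))
      \<partial>coll_paths \<partial>measure_pmf (coll_draw n (1 - \<rho>) p))"
    using assms rho_less_1
    by (simp add: coll_time_from_Cons pow_enat_eSuc pow_enat_nonneg ennreal_mult)
  also have "\<dots> = (\<integral>\<^sup>+y. ennreal (1 - \<rho>) * coll_gf_ennreal (insert y S) \<partial>measure_pmf (coll_draw n (1 - \<rho>) p))"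
    by (subst nn_integral_cmult) (simp_all add: coll_gf_ennreal_def)
  also have "\<dots> = (\<Sum>i\<in>{1..n}. ennreal (p i / (1 - \<rho>)) * ennreal (1 - \<rho>) * coll_gf_ennreal (insert i S))"
    by (simp add: nn_integral_coll_draw mult.assoc)
  also have "\<dots> = (\<Sum>i\<in>{1..n}. ennreal (p i) * coll_gf_ennreal (insert i S))"
    using p_pos rho_less_1 by (intro sum.cong) (simp_all add: ennreal_mult[symmetric] less_imp_le)
  finally show ?thesis .
qed

definition coll_gf :: "nat set \<Rightarrow> real" where
  "coll_gf S = enn2real (coll_gf_ennreal S)"

lemma coll_gf_ennreal_eq: "coll_gf_ennreal S = ennreal (coll_gf S)"
proof -
  have "coll_gf_ennreal S < top"
    using coll_gf_ennreal_le_1 ennreal_one_less_top by (rule le_less_trans)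
  then show ?thesis
    by (simp add: coll_gf_def)
qed

lemma coll_gf_nonneg: "0 \<le> coll_gf S"
  by (simp add: coll_gf_def)

lemma coll_gf_le_1: "coll_gf S \<le> 1"
  using coll_gf_ennreal_le_1[of S] by (simp add: coll_gf_ennreal_eq)

lemma coll_gf_full: "coll_gf {1..n} = 1"
  by (simp add: coll_gf_def coll_gf_ennreal_full)

lemma coll_harmonic_coll_gf: "coll_harmonic coll_gf"
  unfolding coll_harmonic_def
proof (intro allI impI)
  fix S assume "S \<subset> {1..n}"
  then have "ennreal (coll_gf S) = (\<Sum>i\<in>{1..n}. ennreal (p i) * ennreal (coll_gf (insert i S)))"
    using coll_gf_ennreal_step[of S] by (auto simp: coll_gf_ennreal_eq)
  also have "\<dots> = ennreal (\<Sum>i\<in>{1..n}. p i * coll_gf (insert i S))"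
    using p_pos by (intro sum_ennreal_mult) (auto simp: coll_gf_nonneg less_imp_le)
  finally show "coll_gf S = (\<Sum>i\<in>{1..n}. p i * coll_gf (insert i S))"
    using p_pos by (subst (asm) ennreal_inj) (auto simp: coll_gf_nonneg less_imp_le intro!: sum_nonneg)
qed

lemma coll_gf_empty_pos: "0 < coll_gf {}"
  using coll_harmonic_coll_gf by (rule coll_harmonic_pos) (use coll_gf_full coll_gf_nonneg in auto)

definition reset_mean_closed :: "nat set \<Rightarrow> real" where
  "reset_mean_closed S = (1 - coll_gf S) / (\<rho> * coll_gf {})"

lemma reset_system_reset_mean_closed: "reset_system reset_mean_closed"
  unfolding reset_mean_closed_def[abs_def]
  using coll_harmonic_coll_gf coll_gf_full coll_gf_empty_pos by (intro reset_system_closed_form) auto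

lemma reset_mean_closed_nonneg: "0 \<le> reset_mean_closed S"
  using coll_gf_le_1[of S] coll_gf_empty_pos rho_pos by (simp add: reset_mean_closed_def)

lemma ennreal_reset_rhs:
  assumes "\<And>S. 0 \<le> f S"
  shows "ennreal (1 + \<rho> * f {} + (\<Sum>i\<in>{1..n}. p i * f (insert i S)))
       = 1 + ennreal \<rho> * ennreal (f {}) + (\<Sum>i\<in>{1..n}. ennreal (p i) * ennreal (f (insert i S)))"
proof -
  have "(\<Sum>i\<in>{1..n}. ennreal (p i) * ennreal (f (insert i S))) = ennreal (\<Sum>i\<in>{1..n}. p i * f (insert i S))"
    using p_pos assms by (intro sum_ennreal_mult) (auto intro: less_imp_le)
  moreover have "0 \<le> (\<Sum>i\<in>{1..n}. p i * f (insert i S))"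
    using p_pos assms by (intro sum_nonneg mult_nonneg_nonneg) (auto intro: less_imp_le)
  ultimately show ?thesis
    using assms[of "{}"] rho_pos by (simp add: ennreal_plus ennreal_mult)
qed

lemma reset_mean_upto_le_closed:
  assumes "S \<subseteq> {1..n}"
  shows "reset_mean_upto (enat m) S \<le> ennreal (reset_mean_closed S)"
  using assms
proof (induction m arbitrary: S)
  case 0
  then show ?case
    by (simp add: reset_mean_upto_def zero_enat_def[symmetric])
next
  case (Suc m)
  show ?case
  proof (cases "S = {1..n}")
    case False
    with Suc.prems have S: "S \<subset> {1..n}" by blast
    then have "reset_mean_upto (enat (Suc m)) S
        = 1 + ennreal \<rho> * reset_mean_upto (enat m) {}
          + (\<Sum>i\<in>{1..n}. ennreal (p i) * reset_mean_upto (enat m) (insert i S))"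
      by (auto simp: reset_mean_upto_eSuc eSuc_enat[symmetric])
    also have "\<dots> \<le> 1 + ennreal \<rho> * ennreal (reset_mean_closed {})
          + (\<Sum>i\<in>{1..n}. ennreal (p i) * ennreal (reset_mean_closed (insert i S)))"
      using Suc.IH Suc.prems by (intro add_mono mult_left_mono sum_mono order_refl) auto
    also have "\<dots> = ennreal (1 + \<rho> * reset_mean_closed {} + (\<Sum>i\<in>{1..n}. p i * reset_mean_closed (insert i S)))"
      by (rule ennreal_reset_rhs[symmetric]) (rule reset_mean_closed_nonneg)
    also have "\<dots> = ennreal (reset_mean_closed S)"
      using reset_system_reset_mean_closed S by (simp add: reset_system_def)
    finally show ?thesis .
  qed (simp add: reset_mean_upto_full)
qed

definition reset_mean :: "nat set \<Rightarrow> real" where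
  "reset_mean S = enn2real (reset_mean_upto \<infinity> S)"

lemma reset_mean_upto_infinity_eq:
  assumes "S \<subseteq> {1..n}"
  shows "reset_mean_upto \<infinity> S = ennreal (reset_mean S)"
proof -
  have "reset_mean_upto \<infinity> S \<le> ennreal (reset_mean_closed S)"
    unfolding reset_mean_upto_infinity using assms by (intro SUP_least reset_mean_upto_le_closed)
  then have "reset_mean_upto \<infinity> S < top"
    using ennreal_less_top by (rule le_less_trans)
  then show ?thesis
    by (simp add: reset_mean_def)
qed

lemma reset_system_reset_mean: "reset_system reset_mean"
  unfolding reset_system_def
proof (intro conjI allI impI)
  fix S assume S: "S \<subset> {1..n}"
  then have "ennreal (reset_mean S) = 1 + ennreal \<rho> * ennreal (reset_mean {})
      + (\<Sum>i\<in>{1..n}. ennreal (p i) * ennreal (reset_mean (insert i S)))"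
    using reset_mean_upto_eSuc[of S \<infinity>] by (auto simp: reset_mean_upto_infinity_eq)
  also have "\<dots> = ennreal (1 + \<rho> * reset_mean {} + (\<Sum>i\<in>{1..n}. p i * reset_mean (insert i S)))"
    by (rule ennreal_reset_rhs[symmetric]) (simp add: reset_mean_def)
  finally show "reset_mean S = 1 + \<rho> * reset_mean {} + (\<Sum>i\<in>{1..n}. p i * reset_mean (insert i S))"
    using rho_pos p_pos
    by (subst (asm) ennreal_inj) (auto simp: reset_mean_def less_imp_le intro!: add_nonneg_nonneg sum_nonneg)
qed (simp add: reset_mean_def reset_mean_upto_full)

lemma expected_reset_time:
  "(\<integral>\<^sup>+\<omega>. ennreal_of_enat (reset_time n \<omega>) \<partial>reset_paths) = ennreal ((1 - coll_gf {}) / (\<rho> * coll_gf {}))"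
proof -
  have "reset_mean {} = reset_mean_closed {}"
    using coll_gf_empty_pos
    by (intro reset_system_unique[OF coll_harmonic_coll_gf coll_gf_full _
          reset_system_reset_mean reset_system_reset_mean_closed]) auto
  moreover have "(\<integral>\<^sup>+\<omega>. ennreal_of_enat (reset_time n \<omega>) \<partial>reset_paths) = ennreal (reset_mean {})"
    using reset_mean_upto_infinity_eq[of "{}"]
    by (simp add: reset_mean_upto_def reset_time_eq_from_empty)
  ultimately show ?thesis
    by (simp add: reset_mean_closed_def)
qed

lemma coll_gf_empty_eq_integral:
  "coll_gf {} = (\<integral>\<omega>. pow_enat (1 - \<rho>) (coll_time n \<omega>) \<partial>coll_paths)"
  unfolding coll_gf_def coll_gf_ennreal_def coll_time_eq_from_empty
proof (rule integral_eq_nn_integral[symmetric])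
  show "AE \<omega> in coll_paths. 0 \<le> pow_enat (1 - \<rho>) (coll_time_from n {} \<omega>)"
    using rho_less_1 by (simp add: pow_enat_nonneg)
qed measurable

end

theorem mainTheorem18:
  fixes n :: nat and \<rho> :: real and p :: "nat \<Rightarrow> real"
  assumes "n \<ge> 1"
    and "0 < \<rho>" and "\<rho> < 1"
    and "\<And>i. i \<in> {1..n} \<Longrightarrow> p i > 0"
    and "(\<Sum>i\<in>{1..n}. p i) = 1 - \<rho>"
  defines "q \<equiv> 1 - \<rho>"
  defines "s \<equiv> (\<integral>\<omega>. pow_enat q (coll_time n \<omega>) \<partial>(stream_space (measure_pmf (coll_draw n q p))))"
  shows "(\<integral>\<^sup>+\<omega>. ennreal_of_enat (reset_time n \<omega>) \<partial>(stream_space (measure_pmf (reset_draw n \<rho> p))))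
           = ennreal ((1 - s) / (\<rho> * s))"
proof -
  interpret reset_collector n \<rho> p
    using assms(2-5) by unfold_locales
  have "s = coll_gf {}"
    unfolding s_def q_def by (rule coll_gf_empty_eq_integral[symmetric])
  then show ?thesis
    using expected_reset_time by simp
qed

end
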